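(* Let $p\ge19$ be prime and $n\ge10^6$, and let $r(p,n)$ be the maximum size of a subset of $\mathbb{F}_p^n$ containing no nontrivial three-term arithmetic progression (no $x,x+d,x+2d$ all in the set with $d\ne0$). Then $r(p,n)\ge p^{0.782n}$ and $r(p,n)\ge\big((p+1)/2.0001\big)^{n-2}$. *)

theory Defs
  imports Complex_Main "HOL-Computational_Algebra.Primes"
begin

text \<open>The vector space F_p^n, represented as functions nat => nat with coordinates
  i < n taking values in {0..<p} (residues mod p) and all other coordinates 0.\<close>
definition Fpn :: "nat \<Rightarrow> nat \<Rightarrow> (nat \<Rightarrow> nat) set" where
  "Fpn p n = {x. \<forall>i. (i < n \<longrightarrow> x i < p) \<and> (n \<le> i \<longrightarrow> x i = 0)}"

definition vadd :: "nat \<Rightarrow> (nat \<Rightarrow> nat) \<Rightarrow> (nat \<Rightarrow> nat) \<Rightarrow> (nat \<Rightarrow> nat)" where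
  "vadd p x y = (\<lambda>i. (x i + y i) mod p)"

definition ap3_free :: "nat \<Rightarrow> nat \<Rightarrow> (nat \<Rightarrow> nat) set \<Rightarrow> bool" where
  "ap3_free p n A \<longleftrightarrow>
     (\<forall>x\<in>Fpn p n. \<forall>d\<in>Fpn p n. d \<noteq> (\<lambda>_. 0) \<longrightarrow>
        \<not> (x \<in> A \<and> vadd p x d \<in> A \<and> vadd p x (vadd p d d) \<in> A))"

definition r3 :: "nat \<Rightarrow> nat \<Rightarrow> nat" where
  "r3 p n = Max (card ` {A. A \<subseteq> Fpn p n \<and> ap3_free p n A})"

end

theory Submission
  imports Defs "HOL-Library.FuncSet" "HOL-Analysis.Convex"
begin

text \<open>Behrend's sphere construction without any optimisation. Write \<open>p = 2h + 1\<close>. In the cube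
  \<open>{0..h}\<^sup>n\<close> addition of residues never wraps around, so a 3-AP there is a genuine
  arithmetic progression of integer vectors, and a sphere \<open>\<Sum>x\<^sub>i\<^sup>2 = k\<close> contains none by
  strict convexity of the squared norm. The \<open>(h + 1)\<^sup>n\<close> points of the cube lie on at most
  \<open>nh\<^sup>2 + 1\<close> spheres, so \<open>r(p,n) \<ge> ((p+1)/2)\<^sup>n / (n((p-1)/2)\<^sup>2 + 1)\<close>. Both claimed bounds
  follow because \<open>p\<^bsup>226/289\<^esup> \<le> (p+1)/2\<close> for \<open>p \<ge> 19\<close> (with equality almost attained at
  \<open>p = 19\<close>), and for \<open>n \<ge> 10\<^sup>6\<close> the polynomial denominator is absorbed by the slack
  \<open>p\<^bsup>n/144500\<^esup>\<close>, resp. by \<open>(20001/20000)\<^bsup>n-2\<^esup>\<close>.\<close>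

lemma finite_Fpn: "finite (Fpn p n)"
proof -
  have "Fpn p n = {f. \<forall>x. (x \<in> {..<n} \<longrightarrow> f x \<in> {..<p}) \<and> (x \<notin> {..<n} \<longrightarrow> f x = 0)}"
    unfolding Fpn_def by auto
  thus ?thesis using finite_set_of_finite_funs[of "{..<n}" "{..<p}" 0] by simp
qed

lemma card_le_r3:
  assumes "A \<subseteq> Fpn p n" "ap3_free p n A"
  shows "card A \<le> r3 p n"
proof -
  have "finite {A. A \<subseteq> Fpn p n \<and> ap3_free p n A}"
    by (rule finite_subset[of _ "Pow (Fpn p n)"]) (use finite_Fpn in auto)
  then show ?thesis unfolding r3_def
    by (intro Max_ge finite_imageI) (use assms in auto)
qed

lemma ex_card_UN_le_card_mult:
  assumes "finite I" "I \<noteq> {}" "finite (\<Union>k\<in>I. S k)"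
  shows "\<exists>k\<in>I. card (\<Union>k\<in>I. S k) \<le> card I * card (S k)"
proof (rule ccontr)
  let ?B = "\<Union>k\<in>I. S k"
  assume "\<not> ?thesis"
  hence lt: "\<And>k. k \<in> I \<Longrightarrow> card I * card (S k) < card ?B" by auto
  have "card I * card ?B \<le> card I * (\<Sum>k\<in>I. card (S k))"
    by (intro mult_le_mono2 card_UN_le assms(1))
  also have "\<dots> = (\<Sum>k\<in>I. card I * card (S k))" by (simp add: sum_distrib_left)
  also have "\<dots> < (\<Sum>k\<in>I. card ?B)" using assms lt by (intro sum_strict_mono) auto
  also have "\<dots> = card I * card ?B" by simp
  finally show False by simp
qed

definition cube :: "nat \<Rightarrow> nat \<Rightarrow> nat \<Rightarrow> (nat \<Rightarrow> nat) set" where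
  "cube p n h = {x \<in> Fpn p n. \<forall>i. x i \<le> h}"

definition sum_squares :: "nat \<Rightarrow> (nat \<Rightarrow> nat) \<Rightarrow> nat" where
  "sum_squares n x = (\<Sum>i<n. (x i)\<^sup>2)"

definition cube_sphere :: "nat \<Rightarrow> nat \<Rightarrow> nat \<Rightarrow> nat \<Rightarrow> (nat \<Rightarrow> nat) set" where
  "cube_sphere p n h k = {x \<in> cube p n h. sum_squares n x = k}"

lemma cube_sphere_subset_Fpn: "cube_sphere p n h k \<subseteq> Fpn p n"
  unfolding cube_sphere_def cube_def by auto

lemma finite_cube: "finite (cube p n h)"
  unfolding cube_def using finite_Fpn by auto

lemma card_cube:
  assumes "h < p"
  shows "card (cube p n h) = (h + 1) ^ n"
proof -
  let ?extend = "\<lambda>g i. if i < n then g i else 0"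
  have "bij_betw (\<lambda>x. restrict x {..<n}) (cube p n h) (PiE {..<n} (\<lambda>_. {..h}))"
  proof (rule bij_betw_byWitness[where f' = ?extend])
    show "\<forall>x\<in>cube p n h. ?extend (restrict x {..<n}) = x"
      by (auto simp: cube_def Fpn_def fun_eq_iff)
    show "\<forall>g\<in>PiE {..<n} (\<lambda>_. {..h}). restrict (?extend g) {..<n} = g"
      by (auto simp: PiE_def extensional_def)
    show "(\<lambda>x. restrict x {..<n}) ` cube p n h \<subseteq> PiE {..<n} (\<lambda>_. {..h})"
      by (intro image_subsetI restrict_PiE) (auto simp: cube_def Pi_def)
    show "?extend ` PiE {..<n} (\<lambda>_. {..h}) \<subseteq> cube p n h"
      using assms by (auto simp: cube_def Fpn_def PiE_def Pi_def)
  qed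
  then have "card (cube p n h) = card (PiE {..<n} (\<lambda>_. {..h}))"
    by (rule bij_betw_same_card)
  also have "\<dots> = (h + 1) ^ n" by (simp add: card_PiE)
  finally show ?thesis .
qed

lemma cube_eq_UN_cube_sphere: "cube p n h = (\<Union>k\<in>{..n * h\<^sup>2}. cube_sphere p n h k)"
proof -
  have "sum_squares n x \<le> n * h\<^sup>2" if "x \<in> cube p n h" for x
  proof -
    have "\<And>i. i \<in> {..<n} \<Longrightarrow> (x i)\<^sup>2 \<le> h\<^sup>2"
      using that by (auto simp: cube_def intro: power_mono)
    then have "sum_squares n x \<le> of_nat (card {..<n}) * h\<^sup>2"
      unfolding sum_squares_def by (rule sum_bounded_above)
    then show ?thesis by simp
  qed
  then show ?thesis by (auto simp: cube_sphere_def)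
qed

text \<open>Residues \<open>a, a + d, a + 2d\<close> mod \<open>2h + 1\<close> that all lie in \<open>{0..h}\<close> form a genuine
  progression: both sides below are \<open>< p\<close> and agree mod \<open>p\<close>.\<close>

lemma midpoint_without_wraparound:
  fixes p h a d :: nat
  assumes p: "p = 2 * h + 1"
    and "a \<le> h" "(a + d) mod p \<le> h" "(a + (d + d) mod p) mod p \<le> h"
  shows "a + (a + (d + d) mod p) mod p = 2 * ((a + d) mod p)"
proof -
  have "(a + (a + (d + d) mod p) mod p) mod p = (2 * ((a + d) mod p)) mod p"
    by (simp add: mod_simps) (simp add: algebra_simps mult_2_right)
  moreover have "a + (a + (d + d) mod p) mod p < p" "2 * ((a + d) mod p) < p"
    using assms by auto
  ultimately show ?thesis by simp
qed

lemma mod_add_eq_self_imp_eq_0: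
  fixes a d p :: nat
  assumes "(a + d) mod p = a" "a < p" "d < p"
  shows "d = 0"
proof (cases "a + d < p")
  case True
  then show ?thesis using assms by simp
next
  case False
  then have "(a + d) mod p = a + d - p" using assms by (simp add: le_mod_geq)
  then show ?thesis using assms False by linarith
qed

lemma sum_squares_midpoint_eq:
  assumes mid: "\<And>i. x i + z i = 2 * y i"
    and "sum_squares n x = sum_squares n y" "sum_squares n z = sum_squares n y"
    and "i < n"
  shows "x i = z i"
proof -
  have sq: "(int (x i) - int (z i))\<^sup>2 = 2 * int ((x i)\<^sup>2) + 2 * int ((z i)\<^sup>2) - 4 * int ((y i)\<^sup>2)"
    for i
  proof -
    have "int (x i) + int (z i) = 2 * int (y i)" using mid[of i] by linarith
    then have "4 * (int (y i))\<^sup>2 = (int (x i) + int (z i))\<^sup>2" by (simp add: power_mult_distrib)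
    then show ?thesis unfolding power2_diff power2_sum of_nat_power by linarith
  qed
  have "(\<Sum>i<n. (int (x i) - int (z i))\<^sup>2)
      = 2 * int (sum_squares n x) + 2 * int (sum_squares n z) - 4 * int (sum_squares n y)"
    unfolding sq sum_squares_def by (simp add: sum.distrib sum_subtractf sum_distrib_left)
  also have "\<dots> = 0" using assms by simp
  finally have "\<forall>i\<in>{..<n}. (int (x i) - int (z i))\<^sup>2 = 0"
    by (subst (asm) sum_nonneg_eq_0_iff) auto
  then show ?thesis using \<open>i < n\<close> by auto
qed

lemma ap3_free_cube_sphere:
  assumes p: "p = 2 * h + 1"
  shows "ap3_free p n (cube_sphere p n h k)"
  unfolding ap3_free_def
proof (intro ballI impI notI)
  fix x d assume dF: "d \<in> Fpn p n" and d0: "d \<noteq> (\<lambda>_. 0)"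
  let ?y = "vadd p x d" and ?z = "vadd p x (vadd p d d)"
  assume "x \<in> cube_sphere p n h k \<and> ?y \<in> cube_sphere p n h k \<and> ?z \<in> cube_sphere p n h k"
  then have small: "x i \<le> h" "?y i \<le> h" "?z i \<le> h"
    and spheres: "sum_squares n x = k" "sum_squares n ?y = k" "sum_squares n ?z = k" for i
    by (auto simp: cube_sphere_def cube_def)
  have mid: "x i + ?z i = 2 * ?y i" for i
    using midpoint_without_wraparound[OF p] small by (simp add: vadd_def)
  have "d i = 0" for i
  proof (cases "i < n")
    case True
    then have "x i = ?z i"
      using sum_squares_midpoint_eq[of x ?z ?y n i, OF mid] spheres by simp
    then have "(x i + d i) mod p = x i" using mid[of i] by (simp add: vadd_def)
    moreover have "x i < p" "d i < p" using small(1)[of i] p dF True by (auto simp: Fpn_def)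
    ultimately show ?thesis by (rule mod_add_eq_self_imp_eq_0)
  next
    case False
    then show ?thesis using dF by (auto simp: Fpn_def)
  qed
  with d0 show False by auto
qed

lemma behrend_sphere_bound: "(h + 1) ^ n \<le> (n * h\<^sup>2 + 1) * r3 (2 * h + 1) n"
proof -
  let ?p = "2 * h + 1"
  obtain k where "card (cube ?p n h) \<le> card {..n * h\<^sup>2} * card (cube_sphere ?p n h k)"
    using ex_card_UN_le_card_mult[of "{..n * h\<^sup>2}" "cube_sphere ?p n h"]
      finite_cube[of ?p n h] by (auto simp flip: cube_eq_UN_cube_sphere)
  then have "(h + 1) ^ n \<le> (n * h\<^sup>2 + 1) * card (cube_sphere ?p n h k)"
    by (simp add: card_cube)
  also have "\<dots> \<le> (n * h\<^sup>2 + 1) * r3 ?p n"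
    using card_le_r3[OF cube_sphere_subset_Fpn ap3_free_cube_sphere[OF refl]]
    by (rule mult_le_mono2)
  finally show ?thesis .
qed

lemma r3_ge_sphere_bound:
  assumes "odd p"
  shows "((real p + 1) / 2) ^ n / (real n * ((real p - 1) / 2)\<^sup>2 + 1) \<le> real (r3 p n)"
proof -
  obtain h where p: "p = 2 * h + 1" using assms oddE by blast
  have "real ((h + 1) ^ n) \<le> real ((n * h\<^sup>2 + 1) * r3 p n)"
    unfolding p by (rule of_nat_mono[OF behrend_sphere_bound])
  then have "(real h + 1) ^ n \<le> (real n * (real h)\<^sup>2 + 1) * real (r3 p n)"
    by (simp add: algebra_simps)
  moreover have "(real p + 1) / 2 = real h + 1" "(real p - 1) / 2 = real h" by (simp_all add: p)
  ultimately show ?thesis by (simp only:) (simp add: pos_divide_le_eq add_nonneg_pos mult.commute)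
qed

lemma nineteen_powr_226_289_le_10: "(19::real) powr (226/289) \<le> 10"
proof -
  have "(19 powr (226/289::real)) ^ Suc 288 = (19::real) ^ 226"
    by (simp add: powr_powr flip: powr_realpow)
  also have "\<dots> \<le> 10 ^ Suc 288" by simp
  finally show ?thesis by (rule power_le_imp_le_base) auto
qed

text \<open>Concavity of \<open>s \<mapsto> s\<^bsup>226/289\<^esup>\<close> (Young's inequality), tangent at \<open>s = 1\<close>.\<close>

lemma powr_226_289_le_half_succ:
  fixes p :: real
  assumes "p \<ge> 19"
  shows "p powr (226/289) \<le> (p + 1) / 2"
proof -
  define s where "s = p / 19"
  have s1: "s \<ge> 1" and ps: "p = 19 * s" using assms by (simp_all add: s_def)
  have "p powr (226/289) = 19 powr (226/289) * s powr (226/289)"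
    using s1 ps by (simp add: powr_mult)
  also have "\<dots> \<le> 10 * (226/289 * s + 63/289)"
  proof (rule mult_mono)
    show "s powr (226/289) \<le> 226/289 * s + 63/289"
      using Youngs_inequality_0[of "226/289" "63/289" s 1] s1 by simp
  qed (use nineteen_powr_226_289_le_10 in auto)
  also have "\<dots> \<le> (p + 1) / 2" using s1 ps by simp
  finally show ?thesis .
qed

lemma one_plus_le_19_powr:
  fixes s :: real
  assumes "s \<ge> 0"
  shows "1 + s \<le> 19 powr s"
proof -
  have "1 \<le> ln (19::real)"
    using exp_le by (subst ln_ge_iff) auto
  then have "1 + s \<le> 1 + s * ln 19" using mult_left_mono[of 1 "ln 19" s] assms by simp
  also have "\<dots> \<le> exp (s * ln 19)" by (rule exp_ge_add_one_self)
  also have "\<dots> = 19 powr s" by (simp add: powr_def)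
  finally show ?thesis .
qed

text \<open>For \<open>t = n/144500\<close> the left-hand side is \<open>np\<^sup>2/4 + 1\<close>, which bounds the number of
  spheres; \<open>130321 = 19\<^sup>4\<close>.\<close>

lemma powr_ge_polynomial:
  fixes p t :: real
  assumes p: "p \<ge> 19" and t: "t \<ge> 1000000/144500"
  shows "36125 * t * p\<^sup>2 + 1 \<le> p powr t"
proof -
  have "130321 * (t - 5) = 19 powr (4::real) * (1 + (t - 6))"
    by (simp add: powr_realpow[of 19 4, simplified])
  also have "\<dots> \<le> 19 powr (4::real) * 19 powr (t - 6)"
    using t by (intro mult_left_mono one_plus_le_19_powr) auto
  also have "\<dots> = 19 powr (4 + (t - 6))" by (rule powr_add[symmetric])
  also have "\<dots> = 19 powr (t - 2)" by (rule arg_cong[where f = "(powr) 19"]) simp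
  also have "\<dots> \<le> p powr (t - 2)" using p t by (intro powr_mono2) auto
  finally have "p\<^sup>2 * (130321 * (t - 5)) \<le> p\<^sup>2 * p powr (t - 2)"
    by (intro mult_left_mono) auto
  also have "p\<^sup>2 * p powr (t - 2) = p powr t"
    using p by (simp add: powr_add[of p 2 "t - 2", simplified] powr_realpow)
  finally have "p\<^sup>2 * (130321 * (t - 5)) \<le> p powr t" .
  moreover have "1 * 1 \<le> p\<^sup>2 * (94196 * t - 651605)"
    using p t by (intro mult_mono) (auto simp: one_le_power)
  ultimately show ?thesis by (simp add: algebra_simps)
qed

lemma linear_le_two_pow: "q \<ge> 49 \<Longrightarrow> 20000 * q + 20002 \<le> (2::nat) ^ q"
  by (induction q rule: dec_induct) simp_all

lemma linear_le_pow_20001_20000: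
  assumes "k \<ge> (999998::nat)"
  shows "real k + 2 \<le> (20001/20000) ^ k"
proof -
  define q where "q = k div 20000"
  have q49: "q \<ge> 49" and kq: "k \<le> 20000 * q + 19999" "20000 * q \<le> k"
    using assms by (simp_all add: q_def)
  have "real k + 2 \<le> real (20000 * q + 20002)" using kq by simp
  also have "\<dots> \<le> 2 ^ q" using linear_le_two_pow[OF q49]
    by (metis of_nat_le_iff of_nat_numeral of_nat_power)
  also have "\<dots> \<le> ((20001/20000) ^ 20000) ^ q"
  proof (rule power_mono)
    show "(2::real) \<le> (20001/20000) ^ 20000"
      using Bernoulli_inequality[of "1/20000::real" 20000] by simp
  qed simp
  also have "\<dots> \<le> (20001/20000) ^ k"
    unfolding power_mult[symmetric] using kq by (intro power_increasing) auto
  finally show ?thesis .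
qed

text \<open>The exponent is split as \<open>0.782 = 226/289 - 1/144500\<close>.\<close>

lemma powr_0782_le_sphere_bound:
  fixes p :: real and n :: nat
  assumes p: "p \<ge> 19" and n: "n \<ge> 10^6"
  shows "p powr (0.782 * n) \<le> ((p + 1) / 2) ^ n / (n * ((p - 1) / 2)\<^sup>2 + 1)"
proof -
  define t where "t = real n / 144500"
  have t: "t \<ge> 1000000/144500" using n by (simp add: t_def)
  have "0.782 * real n = 226/289 * n - t" by (simp add: t_def)
  then have "p powr (0.782 * n) = p powr (226/289 * n) / p powr t"
    using p by (simp only:) (simp add: powr_diff)
  also have "\<dots> = (p powr (226/289)) ^ n / p powr t"
    using p by (simp add: powr_powr flip: powr_realpow)
  also have "\<dots> \<le> ((p + 1) / 2) ^ n / (n * ((p - 1) / 2)\<^sup>2 + 1)"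
  proof (rule frac_le)
    show "(p powr (226/289)) ^ n \<le> ((p + 1) / 2) ^ n"
      using powr_226_289_le_half_succ[OF p] by (intro power_mono) auto
    have "((p - 1) / 2)\<^sup>2 \<le> (p / 2)\<^sup>2" using p by (intro power_mono) auto
    then have "n * ((p - 1) / 2)\<^sup>2 \<le> n * (p\<^sup>2 / 4)"
      by (intro mult_left_mono) (auto simp: power_divide)
    also have "\<dots> = 36125 * t * p\<^sup>2" by (simp add: t_def)
    finally show "n * ((p - 1) / 2)\<^sup>2 + 1 \<le> p powr t"
      using powr_ge_polynomial[OF p t] by linarith
  qed (use p in \<open>auto intro: add_nonneg_pos\<close>)
  finally show ?thesis .
qed

lemma pow_div_20001_20000_le_sphere_bound:
  fixes m :: real and n :: nat
  assumes m: "m \<ge> 1" and n: "n \<ge> 10^6"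
  shows "(m / (20001/20000)) ^ (n - 2) \<le> m ^ n / (n * (m - 1)\<^sup>2 + 1)"
proof -
  define k where "k = n - 2"
  define X :: real where "X = (20001/20000) ^ k"
  have nk: "n = k + 2" using n by (simp add: k_def)
  have X: "real n \<le> X" using linear_le_pow_20001_20000[of k] n by (simp add: X_def nk)
  have X1: "1 \<le> X" using X n by simp
  have N: "0 < n * (m - 1)\<^sup>2 + 1" by (intro add_nonneg_pos) auto
  have "n * (m - 1)\<^sup>2 + 1 \<le> X * (m - 1)\<^sup>2 + X"
    using X X1 by (intro add_mono mult_right_mono) auto
  also have "\<dots> \<le> m\<^sup>2 * X" using m X1 by (simp add: power2_eq_square algebra_simps)
  finally have "m ^ k * (n * (m - 1)\<^sup>2 + 1) \<le> m ^ k * (m\<^sup>2 * X)"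
    using m by (intro mult_left_mono) auto
  also have "\<dots> = m ^ n * X" unfolding nk power_add by (simp only: mult.assoc)
  finally have "m ^ k / X \<le> m ^ n / (n * (m - 1)\<^sup>2 + 1)"
    using N X1 by (simp add: divide_le_eq le_divide_eq mult.commute mult.left_commute)
  then show ?thesis unfolding X_def k_def power_divide .
qed

theorem corollary14:
  fixes p n :: nat
  assumes "prime p" and "p \<ge> 19" and "n \<ge> 10^6"
  shows "real (r3 p n) \<ge> real p powr (0.782 * real n) \<and>
         real (r3 p n) \<ge> ((real p + 1) / 2.0001) ^ (n - 2)"
proof -
  define m where "m = (real p + 1) / 2"
  have m_pred: "m - 1 = (real p - 1) / 2" by (simp add: m_def field_simps)
  have "odd p" using assms by (intro prime_odd_nat) auto
  then have r3: "m ^ n / (real n * (m - 1)\<^sup>2 + 1) \<le> real (r3 p n)"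
    unfolding m_pred unfolding m_def by (rule r3_ge_sphere_bound)
  have "real p powr (0.782 * real n) \<le> m ^ n / (real n * (m - 1)\<^sup>2 + 1)"
    unfolding m_pred unfolding m_def using assms by (intro powr_0782_le_sphere_bound) auto
  moreover have "((real p + 1) / 2.0001) ^ (n - 2) \<le> m ^ n / (real n * (m - 1)\<^sup>2 + 1)"
  proof -
    have "(real p + 1) / 2.0001 = m / (20001/20000)" by (simp add: m_def)
    then show ?thesis
      using assms by (simp only:) (intro pow_div_20001_20000_le_sphere_bound, auto simp: m_def)
  qed
  ultimately show ?thesis using r3 by linarith
qed

end
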